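(* Let $G$ be a locally compact second countable principal groupoid which is proper, let $F$ be a Borel subset of $G^{(0)}$ containing exactly one element $e(u)$ of each orbit, and let $\sigma:G^{(0)}\to G^F$ be a regular cross section for $d_F$ with $\sigma(e(v))=e(v)$ for all $v$. Then the quotient topology on $G^F_F$ induced by $q:G\to G^F_F$, $q(x)=\sigma(r(x))x\sigma(d(x))^{-1}$, is locally compact Hausdorff. Consequently $\mathbf C_\sigma(G)$ is dense in $C_c(G)$ for the inductive limit topology.
   Context: $G$ second countable locally compact Hausdorff groupoid with $r$ open. Principal: $G^u_u=\{u\}$ for all units $u$ (i.e. $(r,d)$ injective). Proper: $(r,d):G\to G^{(0)}\times G^{(0)}$ is proper (preimages of compact sets are compact). $G^F=r^{-1}(F)$, $G^F_F=G^F\cap d^{-1}(F)$, $d_F=d|_{G^F}$; a regular cross section is a Borel $\sigma$ with $d(\sigma(u))=u$ and $\sigma(K)$ relatively compact for compact $K$. $\mathbf C_\sigma(G)$ is the linear span of functions $x\mapsto g_1(r(x))g(q(x))g_2(d(x))$ with $g_1,g_2\in C_c(G^{(0)})$, $g\in C_c(G^F_F)$. *)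

theory Defs
  imports "HOL-Analysis.Analysis"
begin

definition groupoid_axioms ::
  "'g set \<Rightarrow> ('g \<Rightarrow> 'g) \<Rightarrow> ('g \<Rightarrow> 'g) \<Rightarrow> ('g \<Rightarrow> 'g \<Rightarrow> 'g) \<Rightarrow> ('g \<Rightarrow> 'g) \<Rightarrow> bool" where
  "groupoid_axioms G r d m i \<longleftrightarrow>
     (\<forall>x\<in>G. r x \<in> G \<and> d x \<in> G \<and> i x \<in> G) \<and>
     (\<forall>x\<in>G. r (r x) = r x \<and> d (r x) = r x \<and> r (d x) = d x \<and> d (d x) = d x) \<and>
     (\<forall>x\<in>G. \<forall>y\<in>G. d x = r y \<longrightarrow> m x y \<in> G \<and> r (m x y) = r x \<and> d (m x y) = d y) \<and>
     (\<forall>x\<in>G. \<forall>y\<in>G. \<forall>z\<in>G. d x = r y \<and> d y = r z \<longrightarrow> m (m x y) z = m x (m y z)) \<and>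
     (\<forall>x\<in>G. m (r x) x = x \<and> m x (d x) = x) \<and>
     (\<forall>x\<in>G. d (i x) = r x \<and> r (i x) = d x \<and> m x (i x) = r x \<and> m (i x) x = d x)"

definition units :: "'g topology \<Rightarrow> ('g \<Rightarrow> 'g) \<Rightarrow> 'g set" where
  "units T r = r ` topspace T"

definition composable :: "'g topology \<Rightarrow> ('g \<Rightarrow> 'g) \<Rightarrow> ('g \<Rightarrow> 'g) \<Rightarrow> ('g \<times> 'g) set" where
  "composable T r d = {(x, y). x \<in> topspace T \<and> y \<in> topspace T \<and> d x = r y}"

definition lcsc_groupoid ::
  "'g topology \<Rightarrow> ('g \<Rightarrow> 'g) \<Rightarrow> ('g \<Rightarrow> 'g) \<Rightarrow> ('g \<Rightarrow> 'g \<Rightarrow> 'g) \<Rightarrow> ('g \<Rightarrow> 'g) \<Rightarrow> bool" where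
  "lcsc_groupoid T r d m i \<longleftrightarrow>
     groupoid_axioms (topspace T) r d m i \<and>
     continuous_map (subtopology (prod_topology T T) (composable T r d)) T (\<lambda>(x, y). m x y) \<and>
     continuous_map T T i \<and>
     continuous_map T T r \<and> continuous_map T T d \<and>
     Hausdorff_space T \<and> locally_compact_space T \<and> second_countable T \<and>
     open_map T (subtopology T (units T r)) r"

definition principal_groupoid :: "'g topology \<Rightarrow> ('g \<Rightarrow> 'g) \<Rightarrow> ('g \<Rightarrow> 'g) \<Rightarrow> bool" where
  "principal_groupoid T r d \<longleftrightarrow> (\<forall>x\<in>topspace T. r x = d x \<longrightarrow> x = d x)"

definition proper_groupoid :: "'g topology \<Rightarrow> ('g \<Rightarrow> 'g) \<Rightarrow> ('g \<Rightarrow> 'g) \<Rightarrow> bool" where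
  "proper_groupoid T r d \<longleftrightarrow>
     (\<forall>K. compactin (prod_topology (subtopology T (units T r)) (subtopology T (units T r))) K
          \<longrightarrow> compactin T {x \<in> topspace T. (r x, d x) \<in> K})"

definition borel_in :: "'a topology \<Rightarrow> 'a set \<Rightarrow> bool" where
  "borel_in X A \<longleftrightarrow> A \<in> sigma_sets (topspace X) {U. openin X U}"

definition rangeF :: "'g topology \<Rightarrow> ('g \<Rightarrow> 'g) \<Rightarrow> 'g set \<Rightarrow> 'g set" where
  "rangeF T r F = {x \<in> topspace T. r x \<in> F}"

definition reductionF :: "'g topology \<Rightarrow> ('g \<Rightarrow> 'g) \<Rightarrow> ('g \<Rightarrow> 'g) \<Rightarrow> 'g set \<Rightarrow> 'g set" where
  "reductionF T r d F = {x \<in> topspace T. r x \<in> F \<and> d x \<in> F}"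

definition regular_cross_section ::
  "'g topology \<Rightarrow> ('g \<Rightarrow> 'g) \<Rightarrow> ('g \<Rightarrow> 'g) \<Rightarrow> 'g set \<Rightarrow> ('g \<Rightarrow> 'g) \<Rightarrow> bool" where
  "regular_cross_section T r d F \<sigma> \<longleftrightarrow>
     (\<forall>u\<in>units T r. \<sigma> u \<in> rangeF T r F \<and> d (\<sigma> u) = u) \<and>
     (\<forall>U. openin T U \<longrightarrow> borel_in (subtopology T (units T r)) {u \<in> units T r. \<sigma> u \<in> U}) \<and>
     (\<forall>K. compactin (subtopology T (units T r)) K \<longrightarrow> compactin T (T closure_of (\<sigma> ` K)))"

definition qmap ::
  "('g \<Rightarrow> 'g) \<Rightarrow> ('g \<Rightarrow> 'g) \<Rightarrow> ('g \<Rightarrow> 'g \<Rightarrow> 'g) \<Rightarrow> ('g \<Rightarrow> 'g) \<Rightarrow> ('g \<Rightarrow> 'g) \<Rightarrow> 'g \<Rightarrow> 'g" where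
  "qmap r d m i \<sigma> x = m (m (\<sigma> (r x)) x) (i (\<sigma> (d x)))"

definition quotient_topology :: "'a topology \<Rightarrow> ('a \<Rightarrow> 'b) \<Rightarrow> 'b set \<Rightarrow> 'b topology" where
  "quotient_topology X q S = topology (\<lambda>U. U \<subseteq> S \<and> openin X {x \<in> topspace X. q x \<in> U})"

definition Cc :: "'a topology \<Rightarrow> ('a \<Rightarrow> complex) set" where
  "Cc X = {f. continuous_map X euclidean f \<and>
              compactin X (X closure_of {x \<in> topspace X. f x \<noteq> 0}) \<and>
              (\<forall>x. x \<notin> topspace X \<longrightarrow> f x = 0)}"

definition Csigma ::
  "'g topology \<Rightarrow> ('g \<Rightarrow> 'g) \<Rightarrow> ('g \<Rightarrow> 'g) \<Rightarrow> ('g \<Rightarrow> 'g \<Rightarrow> 'g) \<Rightarrow> ('g \<Rightarrow> 'g) \<Rightarrow> 'g set \<Rightarrow> ('g \<Rightarrow> 'g)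
   \<Rightarrow> ('g \<Rightarrow> complex) set" where
  "Csigma T r d m i F \<sigma> =
     {f. \<exists>(n::nat) c g1 g g2.
          (\<forall>k<n. g1 k \<in> Cc (subtopology T (units T r)) \<and> g2 k \<in> Cc (subtopology T (units T r)) \<and>
                 g k \<in> Cc (quotient_topology T (qmap r d m i \<sigma>) (reductionF T r d F))) \<and>
          f = (\<lambda>x. if x \<in> topspace T
                   then (\<Sum>k<n. c k * g1 k (r x) * g k (qmap r d m i \<sigma> x) * g2 k (d x)) else 0)}"

text \<open>Density in C_c(X) for the (locally convex) inductive limit topology: a base of
  0-neighbourhoods consists of the absolutely convex subsets U of C_c(X) such that
  U contains a uniform ball of C_K(X) for every compact K.\<close>
definition ind_lim_zero_nbhd :: "'a topology \<Rightarrow> ('a \<Rightarrow> complex) set \<Rightarrow> bool" where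
  "ind_lim_zero_nbhd X U \<longleftrightarrow>
     U \<subseteq> Cc X \<and>
     (\<forall>f\<in>U. \<forall>g\<in>U. \<forall>t::real. 0 \<le> t \<and> t \<le> 1 \<longrightarrow> (\<lambda>x. of_real t * f x + of_real (1 - t) * g x) \<in> U) \<and>
     (\<forall>f\<in>U. \<forall>c::complex. cmod c \<le> 1 \<longrightarrow> (\<lambda>x. c * f x) \<in> U) \<and>
     (\<forall>K. compactin X K \<longrightarrow> (\<exists>\<epsilon>>0. \<forall>g\<in>Cc X.
          {x \<in> topspace X. g x \<noteq> 0} \<subseteq> K \<and> (\<forall>x. cmod (g x) < \<epsilon>) \<longrightarrow> g \<in> U))"

definition dense_ind_lim :: "'a topology \<Rightarrow> ('a \<Rightarrow> complex) set \<Rightarrow> bool" where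
  "dense_ind_lim X A \<longleftrightarrow> A \<subseteq> Cc X \<and>
     (\<forall>f\<in>Cc X. \<forall>U. ind_lim_zero_nbhd X U \<longrightarrow> (\<exists>a\<in>A. (\<lambda>x. f x - a x) \<in> U))"

end

theory Submission
  imports Defs
begin

text \<open>Since \<open>G\<close> is principal, \<open>(r, d)\<close> is injective, and since \<open>F\<close> meets every orbit
  exactly once, \<open>q x\<close> is the point \<open>e (r x) = e (d x)\<close> of \<open>F\<close> on the orbit of \<open>x\<close>. Hence
  \<open>G\<^sup>F\<^sub>F = F\<close>, and the quotient topology turns \<open>F\<close> into a copy of the orbit space in which
  \<open>e\<close> maps open sets of units to open sets, because \<open>r\<close> is open.
  Properness makes \<open>(r, d)\<close> a closed map to \<open>G\<^sup>0 \<times> G\<^sup>0\<close>, so every neighbourhood of a fibre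
  of \<open>(r, d)\<close> contains the preimage of an open rectangle \<open>A \<times> B\<close>. Points of \<open>F\<close> in different
  orbits have empty fibre, and the resulting \<open>e A\<close>, \<open>e B\<close> separate them; local compactness
  passes from the unit space to \<open>F\<close> through \<open>e A \<subseteq> q K\<close>.
  For density, \<open>f \<in> C\<^sub>c(G)\<close> is nearly constant on small rectangles since the fibres of
  \<open>(r, d)\<close> have at most one point. A partition of unity of \<open>P \<times> P\<close> by products
  \<open>\<phi>(u) \<psi>(v)\<close>, where \<open>P = r(supp f) \<union> d(supp f)\<close>, gives a uniform approximation
  \<open>\<Sum> c\<^sub>p \<phi>\<^sub>p(r x) \<psi>\<^sub>p(d x)\<close> with support in a fixed compact set, and inserting a bump on
  the orbit space that is \<open>1\<close> where these products live shows that it lies in \<open>C\<^sub>\<sigma>(G)\<close>.\<close>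

section \<open>Bump functions and partitions of unity\<close>

lemma compactin_finite_subcover_image:
  assumes "compactin X P" "\<And>j. j \<in> J \<Longrightarrow> openin X (U j)" "P \<subseteq> (\<Union>j\<in>J. U j)"
  obtains D where "finite D" "D \<subseteq> J" "P \<subseteq> (\<Union>j\<in>D. U j)"
proof -
  obtain \<F> where "finite \<F>" "\<F> \<subseteq> U ` J" "P \<subseteq> \<Union>\<F>"
    using compactinD[of X P "U ` J"] assms by blast
  then show thesis
    by (metis finite_subset_image that)
qed

lemma mem_closure_of_support:
  "x \<in> topspace X \<Longrightarrow> h x \<noteq> 0 \<Longrightarrow> x \<in> X closure_of {x \<in> topspace X. h x \<noteq> 0}"
  by (rule subsetD[OF closure_of_subset[OF Collect_subset]]) simp

lemma compactin_closure_of_subset: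
  assumes "Hausdorff_space X" "compactin X K" "S \<subseteq> K"
  shows "compactin X (X closure_of S)"
  by (meson assms closed_compactin closedin_closure_of closure_of_minimal compactin_imp_closedin)

definition bump_function :: "'a topology \<Rightarrow> 'a set \<Rightarrow> ('a \<Rightarrow> real) \<Rightarrow> bool" where
  "bump_function X N \<phi> \<longleftrightarrow>
     continuous_map X euclideanreal \<phi> \<and> (\<forall>x. 0 \<le> \<phi> x) \<and>
     compactin X (X closure_of {x \<in> topspace X. \<phi> x \<noteq> 0}) \<and> {x \<in> topspace X. \<phi> x \<noteq> 0} \<subseteq> N"

lemma bump_function_mono: "bump_function X N \<phi> \<Longrightarrow> N \<subseteq> N' \<Longrightarrow> bump_function X N' \<phi>"
  unfolding bump_function_def by blast

lemma bump_function_topspace: "bump_function X N \<phi> \<Longrightarrow> bump_function X (topspace X) \<phi>"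
  unfolding bump_function_def by blast

lemma bump_function_divide:
  assumes \<psi>: "bump_function X N \<psi>" and g: "continuous_map X euclideanreal g" "\<And>x. g x > 0"
  shows "bump_function X N (\<lambda>x. \<psi> x / g x)"
proof -
  have "{x \<in> topspace X. \<psi> x / g x \<noteq> 0} = {x \<in> topspace X. \<psi> x \<noteq> 0}"
    using g(2) by (auto simp: less_imp_neq[THEN not_sym])
  moreover have "continuous_map X euclideanreal (\<lambda>x. \<psi> x / g x)"
    using \<psi> g unfolding bump_function_def by (intro continuous_intros) (auto simp: less_imp_neq[THEN not_sym])
  ultimately show ?thesis
    using \<psi> g(2) unfolding bump_function_def by (simp add: less_imp_le)
qed

lemma compactly_supported_Urysohn:
  assumes lc: "locally_compact_space X" and H: "Hausdorff_space X"
    and K: "compactin X K" and N: "openin X N" "K \<subseteq> N"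
  obtains \<phi> where "bump_function X N \<phi>" "\<And>x. x \<in> K \<Longrightarrow> \<phi> x = 1"
proof -
  obtain U L where U: "openin X U" and L: "compactin X L" "closedin X L" and KUL: "K \<subseteq> U" "U \<subseteq> L"
    using lc K unfolding locally_compact_space_compact_closed_compact[OF disjI1[OF H]] by meson
  have cr: "completely_regular_space X"
    using locally_compact_regular_imp_completely_regular_space[OF lc disjI1[OF H]] .
  obtain f where f: "continuous_map X (top_of_set {0..1::real}) f"
      "f ` (topspace X - U \<inter> N) \<subseteq> {0}" "f ` K \<subseteq> {1}"
  proof (rule Urysohn_completely_regular_compact_closed[of 0 1 X K "topspace X - U \<inter> N", OF _ cr K])
    show "closedin X (topspace X - U \<inter> N)"
      using U N(1) by (simp add: closedin_diff openin_Int)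
    show "disjnt K (topspace X - U \<inter> N)"
      using KUL N by (auto simp: disjnt_def)
  qed auto
  define \<phi> where "\<phi> x = max 0 (f x)" for x
  have supp: "{x \<in> topspace X. \<phi> x \<noteq> 0} \<subseteq> U \<inter> N"
    using f(2) by (auto simp: \<phi>_def)
  have "continuous_map X euclideanreal f"
    using f(1) continuous_map_into_fulltopology by blast
  then have "continuous_map X euclideanreal \<phi>"
    unfolding \<phi>_def by (intro continuous_intros)
  moreover have "compactin X (X closure_of {x \<in> topspace X. \<phi> x \<noteq> 0})"
    by (rule compactin_closure_of_subset[OF H L(1)]) (use supp KUL in blast)
  ultimately have "bump_function X N \<phi>"
    using supp unfolding bump_function_def by (auto simp: \<phi>_def)
  moreover have "\<phi> x = 1" if "x \<in> K" for x
    using f(3) that by (auto simp: \<phi>_def)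
  ultimately show thesis by (rule that)
qed

lemma compactin_shrink_finite_cover:
  assumes lc: "locally_compact_space X" and H: "Hausdorff_space X" and P: "compactin X P"
    and N: "\<And>i. i \<in> I \<Longrightarrow> openin X (N i)" and PN: "P \<subseteq> (\<Union>i\<in>I. N i)"
  obtains K where "\<And>i. i \<in> I \<Longrightarrow> compactin X (K i) \<and> K i \<subseteq> N i" "P \<subseteq> (\<Union>i\<in>I. K i)"
proof -
  have nbhd: "neighbourhood_base_of (compactin X) X"
    using locally_compact_imp_neighbourhood_base[OF lc locally_compact_Hausdorff_imp_regular_space[OF lc H]] .
  have "\<exists>i W C. i \<in> I \<and> openin X W \<and> compactin X C \<and> p \<in> W \<and> W \<subseteq> C \<and> C \<subseteq> N i" if p: "p \<in> P" for p
  proof -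
    obtain i where i: "i \<in> I" "p \<in> N i" using PN p by blast
    then obtain W C where "openin X W" "compactin X C" "p \<in> W" "W \<subseteq> C" "C \<subseteq> N i"
      using nbhd N[OF i(1)] unfolding neighbourhood_base_of by meson
    with i show ?thesis by blast
  qed
  then obtain idx W C where WC: "\<And>p. p \<in> P \<Longrightarrow> idx p \<in> I \<and> openin X (W p) \<and> compactin X (C p) \<and>
      p \<in> W p \<and> W p \<subseteq> C p \<and> C p \<subseteq> N (idx p)"
    by metis
  obtain D where D: "finite D" "D \<subseteq> P" "P \<subseteq> (\<Union>p\<in>D. W p)"
    by (rule compactin_finite_subcover_image[OF P, of P W]) (use WC in blast)+
  define K where "K i = (\<Union>p\<in>{p \<in> D. idx p = i}. C p)" for i
  show thesis
  proof
    show "compactin X (K i) \<and> K i \<subseteq> N i" for i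
    proof
      show "compactin X (K i)"
        unfolding K_def using D WC by (intro compactin_Union) auto
      have "C p \<subseteq> N i" if "p \<in> D" "idx p = i" for p
        using WC[of p] D(2) that by auto
      then show "K i \<subseteq> N i"
        unfolding K_def by blast
    qed
    show "P \<subseteq> (\<Union>i\<in>I. K i)"
    proof
      fix x assume "x \<in> P"
      then obtain p where p: "p \<in> D" "x \<in> W p" using D(3) by blast
      then have "x \<in> K (idx p)" and "idx p \<in> I"
        unfolding K_def using WC[of p] D(2) by auto
      then show "x \<in> (\<Union>i\<in>I. K i)" by blast
    qed
  qed
qed

text \<open>Normalising the Urysohn functions of a shrunk cover by \<open>max 1 (\<Sum>i. \<psi> i x)\<close> keeps
  the total mass at most \<open>1\<close> everywhere and exactly \<open>1\<close> on \<open>P\<close>.\<close>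
lemma partition_of_unity_compactin:
  assumes lc: "locally_compact_space X" and H: "Hausdorff_space X" and P: "compactin X P"
    and I: "finite I" and N: "\<And>i. i \<in> I \<Longrightarrow> openin X (N i)" and PN: "P \<subseteq> (\<Union>i\<in>I. N i)"
  obtains \<phi> where "\<And>i. i \<in> I \<Longrightarrow> bump_function X (N i) (\<phi> i)"
    "\<And>x. (\<Sum>i\<in>I. \<phi> i x) \<le> 1" "\<And>x. x \<in> P \<Longrightarrow> (\<Sum>i\<in>I. \<phi> i x) = 1"
proof -
  obtain K where K: "\<And>i. i \<in> I \<Longrightarrow> compactin X (K i) \<and> K i \<subseteq> N i" and PK: "P \<subseteq> (\<Union>i\<in>I. K i)"
    using compactin_shrink_finite_cover[OF lc H P N PN] by metis
  have "\<exists>\<psi>. bump_function X (N i) \<psi> \<and> (\<forall>x\<in>K i. \<psi> x = 1)" if i: "i \<in> I" for i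
  proof -
    obtain \<psi> where "bump_function X (N i) \<psi>" "\<And>x. x \<in> K i \<Longrightarrow> \<psi> x = 1"
      using compactly_supported_Urysohn[OF lc H _ N[OF i]] K[OF i] by blast
    then show ?thesis by blast
  qed
  then obtain \<psi> where \<psi>: "\<And>i. i \<in> I \<Longrightarrow> bump_function X (N i) (\<psi> i) \<and> (\<forall>x\<in>K i. \<psi> i x = 1)"
    by metis
  define S where "S x = (\<Sum>i\<in>I. \<psi> i x)" for x
  define \<phi> where "\<phi> i x = \<psi> i x / max 1 (S x)" for i x
  have norm_pos: "max 1 (S x) > 0" for x
    by simp
  have S_nonneg: "0 \<le> S x" for x
    unfolding S_def using \<psi> by (simp add: bump_function_def sum_nonneg)
  have S_cont: "continuous_map X euclideanreal S"
    unfolding S_def using \<psi> by (intro continuous_map_sum I) (auto simp: bump_function_def)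
  have sum_\<phi>: "(\<Sum>i\<in>I. \<phi> i x) = S x / max 1 (S x)" for x
    unfolding \<phi>_def S_def by (simp add: sum_divide_distrib)
  show thesis
  proof
    show "bump_function X (N i) (\<phi> i)" if "i \<in> I" for i
      unfolding \<phi>_def using \<psi>[OF that] S_cont norm_pos
      by (intro bump_function_divide continuous_intros) auto
    show "(\<Sum>i\<in>I. \<phi> i x) \<le> 1" for x
      unfolding sum_\<phi> using S_nonneg[of x] by (simp add: divide_le_eq)
    show "(\<Sum>i\<in>I. \<phi> i x) = 1" if x: "x \<in> P" for x
    proof -
      obtain j where j: "j \<in> I" "x \<in> K j" using PK x by blast
      have "1 = \<psi> j x" using \<psi>[OF j(1)] j(2) by simp
      also have "\<dots> \<le> S x"
        unfolding S_def using \<psi> j I by (intro member_le_sum) (auto simp: bump_function_def)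
      finally show ?thesis unfolding sum_\<phi> by simp
    qed
  qed
qed

text \<open>The tube lemma, twice: for each \<open>u\<close> finitely many \<open>B (u, v)\<close> cover \<open>P\<close>, the
  intersection \<open>N u\<close> of the corresponding \<open>A (u, v)\<close> is still a neighbourhood of \<open>u\<close>,
  and finitely many \<open>N u\<close> cover \<open>P\<close>.\<close>
lemma compactin_tube_refinement:
  assumes P: "compactin X P"
    and AB: "\<And>p. p \<in> P \<times> P \<Longrightarrow> openin X (A p) \<and> openin X (B p) \<and> fst p \<in> A p \<and> snd p \<in> B p"
  obtains U D N where "finite U" "U \<subseteq> P" "P \<subseteq> (\<Union>u\<in>U. N u)"
    "\<And>u. u \<in> U \<Longrightarrow> openin X (N u) \<and> finite (D u) \<and> D u \<subseteq> P \<and> P \<subseteq> (\<Union>v\<in>D u. B (u, v)) \<and>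
      (\<forall>v\<in>D u. N u \<subseteq> A (u, v))"
proof -
  have "\<exists>D. finite D \<and> D \<subseteq> P \<and> P \<subseteq> (\<Union>v\<in>D. B (u, v))" if u: "u \<in> P" for u
  proof -
    obtain D where "finite D" "D \<subseteq> P" "P \<subseteq> (\<Union>v\<in>D. B (u, v))"
      by (rule compactin_finite_subcover_image[OF P, of P "\<lambda>v. B (u, v)"]) (use AB u in auto)
    then show ?thesis by blast
  qed
  then obtain D where D: "\<And>u. u \<in> P \<Longrightarrow> finite (D u) \<and> D u \<subseteq> P \<and> P \<subseteq> (\<Union>v\<in>D u. B (u, v))"
    by metis
  define N where "N u = (\<Inter>v\<in>D u. A (u, v)) \<inter> topspace X" for u
  have A_open: "openin X (A (u, v))" if "u \<in> P" "v \<in> D u" for u v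
    using AB[of "(u, v)"] D[OF that(1)] that by auto
  have N_open: "openin X (N u)" if "u \<in> P" for u
    unfolding N_def using D A_open that by (intro openin_INT) auto
  obtain U where U: "finite U" "U \<subseteq> P" "P \<subseteq> (\<Union>u\<in>U. N u)"
  proof (rule compactin_finite_subcover_image[OF P, of P N])
    show "P \<subseteq> (\<Union>u\<in>P. N u)"
      unfolding N_def using D AB compactin_subset_topspace[OF P] by fastforce
  qed (use N_open in auto)
  show thesis
  proof (rule that[OF U])
    fix u assume "u \<in> U"
    then have u: "u \<in> P"
      using U(2) by blast
    have "\<forall>v\<in>D u. N u \<subseteq> A (u, v)"
      unfolding N_def by blast
    then show "openin X (N u) \<and> finite (D u) \<and> D u \<subseteq> P \<and> P \<subseteq> (\<Union>v\<in>D u. B (u, v)) \<and>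
        (\<forall>v\<in>D u. N u \<subseteq> A (u, v))"
      using N_open[OF u] D[OF u] by blast
  qed
qed

lemma rectangle_partition_of_unity:
  assumes lc: "locally_compact_space X" and H: "Hausdorff_space X" and P: "compactin X P"
    and AB: "\<And>p. p \<in> P \<times> P \<Longrightarrow> openin X (A p) \<and> openin X (B p) \<and> fst p \<in> A p \<and> snd p \<in> B p"
  obtains S \<phi> \<psi> where "finite S" "S \<subseteq> P \<times> P"
    "\<And>p. p \<in> S \<Longrightarrow> bump_function X (A p) (\<phi> p) \<and> bump_function X (B p) (\<psi> p)"
    "\<And>s t. (\<Sum>p\<in>S. \<phi> p s * \<psi> p t) \<le> 1"
    "\<And>s t. s \<in> P \<Longrightarrow> t \<in> P \<Longrightarrow> (\<Sum>p\<in>S. \<phi> p s * \<psi> p t) = 1"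
proof -
  obtain U D N where U: "finite U" "U \<subseteq> P" "P \<subseteq> (\<Union>u\<in>U. N u)"
    and DN: "\<And>u. u \<in> U \<Longrightarrow> openin X (N u) \<and> finite (D u) \<and> D u \<subseteq> P \<and>
      P \<subseteq> (\<Union>v\<in>D u. B (u, v)) \<and> (\<forall>v\<in>D u. N u \<subseteq> A (u, v))"
    using compactin_tube_refinement[OF P AB] by metis
  have N_open: "\<And>u. u \<in> U \<Longrightarrow> openin X (N u)"
    using DN by blast
  obtain \<phi> where \<phi>: "\<And>u. u \<in> U \<Longrightarrow> bump_function X (N u) (\<phi> u)"
    "\<And>s. (\<Sum>u\<in>U. \<phi> u s) \<le> 1" "\<And>s. s \<in> P \<Longrightarrow> (\<Sum>u\<in>U. \<phi> u s) = 1"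
    using partition_of_unity_compactin[OF lc H P U(1) N_open U(3)] by blast
  have "\<exists>\<psi>. (\<forall>v\<in>D u. bump_function X (B (u, v)) (\<psi> v)) \<and> (\<forall>t. (\<Sum>v\<in>D u. \<psi> v t) \<le> 1) \<and>
      (\<forall>t\<in>P. (\<Sum>v\<in>D u. \<psi> v t) = 1)" if u: "u \<in> U" for u
  proof -
    have Du: "finite (D u)" "D u \<subseteq> P" "P \<subseteq> (\<Union>v\<in>D u. B (u, v))"
      using DN[OF u] by blast+
    have "u \<in> P"
      using u U(2) by blast
    then have B_open: "\<And>v. v \<in> D u \<Longrightarrow> openin X (B (u, v))"
      using AB Du(2) by blast
    obtain \<psi> where "\<And>v. v \<in> D u \<Longrightarrow> bump_function X (B (u, v)) (\<psi> v)"
      "\<And>t. (\<Sum>v\<in>D u. \<psi> v t) \<le> 1" "\<And>t. t \<in> P \<Longrightarrow> (\<Sum>v\<in>D u. \<psi> v t) = 1"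
      using partition_of_unity_compactin[OF lc H P Du(1) B_open Du(3)] by blast
    then show ?thesis by blast
  qed
  then obtain \<psi> where \<psi>: "\<And>u. u \<in> U \<Longrightarrow> (\<forall>v\<in>D u. bump_function X (B (u, v)) (\<psi> u v)) \<and>
      (\<forall>t. (\<Sum>v\<in>D u. \<psi> u v t) \<le> 1) \<and> (\<forall>t\<in>P. (\<Sum>v\<in>D u. \<psi> u v t) = 1)"
    by metis
  have sum_Sigma: "(\<Sum>p\<in>Sigma U D. \<phi> (fst p) s * \<psi> (fst p) (snd p) t) = (\<Sum>u\<in>U. \<phi> u s * (\<Sum>v\<in>D u. \<psi> u v t))"
    for s t
    using U DN by (simp add: sum.Sigma split_def sum_distrib_left)
  show thesis
  proof
    show "finite (Sigma U D)" "Sigma U D \<subseteq> P \<times> P"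
      using U DN by blast+
    show "bump_function X (A p) (\<phi> (fst p)) \<and> bump_function X (B p) (\<psi> (fst p) (snd p))"
      if "p \<in> Sigma U D" for p
      using that \<phi>(1) \<psi> DN bump_function_mono by (cases p) fastforce
    show "(\<Sum>p\<in>Sigma U D. \<phi> (fst p) s * \<psi> (fst p) (snd p) t) \<le> 1" for s t
    proof -
      have "(\<Sum>u\<in>U. \<phi> u s * (\<Sum>v\<in>D u. \<psi> u v t)) \<le> (\<Sum>u\<in>U. \<phi> u s)"
        using \<phi>(1) \<psi> by (intro sum_mono mult_left_le) (auto simp: bump_function_def)
      then show ?thesis using \<phi>(2)[of s] unfolding sum_Sigma by linarith
    qed
    show "(\<Sum>p\<in>Sigma U D. \<phi> (fst p) s * \<psi> (fst p) (snd p) t) = 1" if "s \<in> P" "t \<in> P" for s t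
    proof -
      have "(\<Sum>u\<in>U. \<phi> u s * (\<Sum>v\<in>D u. \<psi> u v t)) = (\<Sum>u\<in>U. \<phi> u s)"
        using \<psi> that(2) by (intro sum.cong) auto
      then show ?thesis using \<phi>(3)[OF that(1)] sum_Sigma by simp
    qed
  qed
qed

lemma norm_diff_weighted_sum_le:
  fixes z :: "'a::real_normed_vector" and w :: "'i \<Rightarrow> real"
  assumes S: "finite S" and w_nonneg: "\<And>k. k \<in> S \<Longrightarrow> 0 \<le> w k"
    and close: "\<And>k. k \<in> S \<Longrightarrow> w k \<noteq> 0 \<Longrightarrow> norm (z - c k) \<le> \<delta>"
    and mass: "(\<Sum>k\<in>S. w k) \<le> 1" and full_mass: "z \<noteq> 0 \<Longrightarrow> (\<Sum>k\<in>S. w k) = 1"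
    and "0 \<le> \<delta>"
  shows "norm (z - (\<Sum>k\<in>S. w k *\<^sub>R c k)) \<le> \<delta>"
proof -
  have "z - (\<Sum>k\<in>S. w k *\<^sub>R c k) = (1 - (\<Sum>k\<in>S. w k)) *\<^sub>R z + (\<Sum>k\<in>S. w k *\<^sub>R (z - c k))"
    by (simp add: sum_subtractf scaleR_sum_left algebra_simps)
  also have "(1 - (\<Sum>k\<in>S. w k)) *\<^sub>R z = 0"
    using full_mass by fastforce
  finally have "norm (z - (\<Sum>k\<in>S. w k *\<^sub>R c k)) = norm (\<Sum>k\<in>S. w k *\<^sub>R (z - c k))"
    by simp
  also have "\<dots> \<le> (\<Sum>k\<in>S. norm (w k *\<^sub>R (z - c k)))"
    by (rule norm_sum)
  also have "\<dots> \<le> (\<Sum>k\<in>S. w k * \<delta>)"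
    using w_nonneg close by (intro sum_mono) (fastforce intro: mult_left_mono)
  also have "\<dots> = (\<Sum>k\<in>S. w k) * \<delta>"
    by (simp add: sum_distrib_right)
  also have "\<dots> \<le> \<delta>"
    using mass \<open>0 \<le> \<delta>\<close> by (simp add: mult_left_le_one_le sum_nonneg w_nonneg)
  finally show ?thesis .
qed

lemma continuous_map_mult:
  fixes f g :: "'a \<Rightarrow> 'b::real_normed_algebra"
  shows "continuous_map X euclidean f \<Longrightarrow> continuous_map X euclidean g \<Longrightarrow>
    continuous_map X euclidean (\<lambda>x. f x * g x)"
  by (simp add: continuous_map_atin tendsto_mult)

definition complexify :: "'a topology \<Rightarrow> ('a \<Rightarrow> real) \<Rightarrow> 'a \<Rightarrow> complex" where
  "complexify X \<phi> x = (if x \<in> topspace X then complex_of_real (\<phi> x) else 0)"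

lemma complexify_apply: "x \<in> topspace X \<Longrightarrow> complexify X \<phi> x = complex_of_real (\<phi> x)"
  by (simp add: complexify_def)

lemma Cc_complexify:
  assumes "bump_function X N \<phi>"
  shows "complexify X \<phi> \<in> Cc X"
proof -
  have "continuous_map X euclidean (\<lambda>x. complex_of_real (\<phi> x))"
    using assms unfolding bump_function_def by (simp add: continuous_map_atin tendsto_of_real)
  then have "continuous_map X euclidean (complexify X \<phi>)"
    by (rule continuous_map_eq) (simp add: complexify_apply)
  moreover have "{x \<in> topspace X. complexify X \<phi> x \<noteq> 0} = {x \<in> topspace X. \<phi> x \<noteq> 0}"
    by (auto simp: complexify_apply)
  ultimately show ?thesis
    using assms unfolding Cc_def bump_function_def by (simp add: complexify_def)
qed

lemma Cc_diff:
  assumes H: "Hausdorff_space X" and f: "f \<in> Cc X" and g: "g \<in> Cc X"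
  shows "(\<lambda>x. f x - g x) \<in> Cc X"
proof -
  let ?supp = "\<lambda>h. X closure_of {x \<in> topspace X. h x \<noteq> (0::complex)}"
  have "{x \<in> topspace X. f x - g x \<noteq> 0} \<subseteq> {x \<in> topspace X. f x \<noteq> 0} \<union> {x \<in> topspace X. g x \<noteq> 0}"
    by auto
  also have "\<dots> \<subseteq> ?supp f \<union> ?supp g"
    by (intro Un_mono closure_of_subset Collect_subset)
  finally have "{x \<in> topspace X. f x - g x \<noteq> 0} \<subseteq> ?supp f \<union> ?supp g" .
  moreover have "compactin X (?supp f \<union> ?supp g)"
    using f g unfolding Cc_def by (simp add: compactin_Un)
  ultimately have "compactin X (?supp (\<lambda>x. f x - g x))"
    by (rule compactin_closure_of_subset[OF H, rotated])
  with f g show ?thesis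
    unfolding Cc_def by (simp add: continuous_map_diff)
qed

section \<open>Quotient topologies\<close>

lemma openin_quotient_topology:
  "openin (quotient_topology X q S) U \<longleftrightarrow> U \<subseteq> S \<and> openin X {x \<in> topspace X. q x \<in> U}"
proof -
  have "istopology (\<lambda>U. U \<subseteq> S \<and> openin X {x \<in> topspace X. q x \<in> U})"
  proof -
    have "{x \<in> topspace X. q x \<in> U \<inter> V} = {x \<in> topspace X. q x \<in> U} \<inter> {x \<in> topspace X. q x \<in> V}"
      for U V by blast
    moreover have "{x \<in> topspace X. q x \<in> \<Union>\<U>} = (\<Union>U\<in>\<U>. {x \<in> topspace X. q x \<in> U})" for \<U>
      by blast
    ultimately show ?thesis
      unfolding istopology_def by (auto intro!: openin_Int openin_Union)
  qed
  then show ?thesis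
    unfolding quotient_topology_def by (simp add: topology_inverse')
qed

lemma topspace_quotient_topology:
  assumes "q ` topspace X \<subseteq> S"
  shows "topspace (quotient_topology X q S) = S"
proof -
  have "{x \<in> topspace X. q x \<in> S} = topspace X"
    using assms by blast
  then have "openin (quotient_topology X q S) S"
    unfolding openin_quotient_topology by simp
  then show ?thesis
    using openin_subset unfolding topspace_def openin_quotient_topology by blast
qed

lemma continuous_map_quotient_topology:
  "q ` topspace X \<subseteq> S \<Longrightarrow> continuous_map X (quotient_topology X q S) q"
  unfolding continuous_map_def topspace_quotient_topology openin_quotient_topology by blast

section \<open>Proper principal groupoids\<close>

locale proper_principal_groupoid =
  fixes T :: "'g topology" and r d :: "'g \<Rightarrow> 'g" and m :: "'g \<Rightarrow> 'g \<Rightarrow> 'g" and i :: "'g \<Rightarrow> 'g"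
  assumes lcsc: "lcsc_groupoid T r d m i"
    and principal: "principal_groupoid T r d"
    and proper: "proper_groupoid T r d"
begin

abbreviation "G \<equiv> topspace T"
abbreviation "G0 \<equiv> units T r"
abbreviation "T0 \<equiv> subtopology T G0"

definition arrow :: "'g \<Rightarrow> 'g \<Rightarrow> 'g \<Rightarrow> bool" where
  "arrow x u v \<longleftrightarrow> x \<in> G \<and> r x = u \<and> d x = v"

lemma groupoid: "groupoid_axioms G r d m i"
  using lcsc unfolding lcsc_groupoid_def by blast

lemma r_in: "x \<in> G \<Longrightarrow> r x \<in> G" and d_in: "x \<in> G \<Longrightarrow> d x \<in> G"
  and inv_in: "x \<in> G \<Longrightarrow> i x \<in> G"
  using groupoid unfolding groupoid_axioms_def by blast+

lemma r_r: "x \<in> G \<Longrightarrow> r (r x) = r x" and d_r: "x \<in> G \<Longrightarrow> d (r x) = r x"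
  and r_d: "x \<in> G \<Longrightarrow> r (d x) = d x"
  using groupoid unfolding groupoid_axioms_def by blast+

lemma mult_in: "x \<in> G \<Longrightarrow> y \<in> G \<Longrightarrow> d x = r y \<Longrightarrow> m x y \<in> G"
  and r_mult: "x \<in> G \<Longrightarrow> y \<in> G \<Longrightarrow> d x = r y \<Longrightarrow> r (m x y) = r x"
  and d_mult: "x \<in> G \<Longrightarrow> y \<in> G \<Longrightarrow> d x = r y \<Longrightarrow> d (m x y) = d y"
  using groupoid unfolding groupoid_axioms_def by blast+

lemma groupoid_assoc:
  "x \<in> G \<Longrightarrow> y \<in> G \<Longrightarrow> z \<in> G \<Longrightarrow> d x = r y \<Longrightarrow> d y = r z \<Longrightarrow> m (m x y) z = m x (m y z)"
  using groupoid unfolding groupoid_axioms_def by blast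

lemma mult_r_left: "x \<in> G \<Longrightarrow> m (r x) x = x" and mult_d_right: "x \<in> G \<Longrightarrow> m x (d x) = x"
  using groupoid unfolding groupoid_axioms_def by blast+

lemma r_inv: "x \<in> G \<Longrightarrow> r (i x) = d x" and d_inv: "x \<in> G \<Longrightarrow> d (i x) = r x"
  and mult_inv_left: "x \<in> G \<Longrightarrow> m (i x) x = d x"
  using groupoid unfolding groupoid_axioms_def by blast+

lemma arrow_r_d: "x \<in> G \<Longrightarrow> arrow x (r x) (d x)"
  by (simp add: arrow_def)

lemma arrow_mult: "arrow x u v \<Longrightarrow> arrow y v w \<Longrightarrow> arrow (m x y) u w"
  unfolding arrow_def using mult_in r_mult d_mult by auto

lemma arrow_inv: "arrow x u v \<Longrightarrow> arrow (i x) v u"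
  unfolding arrow_def using inv_in r_inv d_inv by auto

lemma units_iff: "u \<in> G0 \<longleftrightarrow> u \<in> G \<and> r u = u"
  unfolding units_def using r_in r_r by (auto intro: image_eqI[of u r u, OF sym])

lemma arrow_unit: "u \<in> G0 \<Longrightarrow> arrow u u u"
  unfolding arrow_def units_iff using d_r by metis

lemma arrow_units: "arrow x u v \<Longrightarrow> u \<in> G0 \<and> v \<in> G0"
  unfolding arrow_def units_iff using r_in d_in r_r r_d by auto

lemma arrow_unique:
  assumes x: "arrow x u v" and y: "arrow y u v"
  shows "x = y"
proof -
  have iy: "arrow (i y) v u"
    using arrow_inv[OF y] .
  have "arrow (m x (i y)) u u"
    using arrow_mult[OF x iy] .
  then have xy: "m x (i y) = u"
    using principal unfolding principal_groupoid_def arrow_def by metis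
  have G: "x \<in> G" "i y \<in> G" "y \<in> G" and rd: "d x = r (i y)" "d (i y) = r y"
    using x y iy unfolding arrow_def by auto
  have "x = m x (m (i y) y)"
    using G x y mult_inv_left mult_d_right unfolding arrow_def by metis
  also have "\<dots> = m (m x (i y)) y"
    using groupoid_assoc[OF G rd] by simp
  also have "\<dots> = y"
    using xy y mult_r_left unfolding arrow_def by metis
  finally show ?thesis .
qed

lemma Hausdorff_T: "Hausdorff_space T"
  and locally_compact_T: "locally_compact_space T"
  and open_map_r: "open_map T T0 r"
  using lcsc unfolding lcsc_groupoid_def by blast+

lemma units_subset: "G0 \<subseteq> G"
  unfolding units_def using r_in by blast

lemma topspace_T0 [simp]: "topspace T0 = G0"
  using units_subset by auto

lemma r_in_units: "x \<in> G \<Longrightarrow> r x \<in> G0" and d_in_units: "x \<in> G \<Longrightarrow> d x \<in> G0"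
  using arrow_units arrow_r_d by blast+

lemma continuous_map_r: "continuous_map T T0 r" and continuous_map_d: "continuous_map T T0 d"
  using lcsc r_in_units d_in_units unfolding lcsc_groupoid_def
  by (auto simp: continuous_map_in_subtopology)

lemma closedin_units: "closedin T G0"
proof -
  have "continuous_map T T r"
    using lcsc unfolding lcsc_groupoid_def by blast
  then have "closedin T {x \<in> G. r x = id x}"
    using closedin_continuous_maps_eq[OF Hausdorff_T _ continuous_map_id] by blast
  moreover have "G0 = {x \<in> G. r x = id x}"
    using units_iff by auto
  ultimately show ?thesis by simp
qed

lemma Hausdorff_T0: "Hausdorff_space T0"
  using Hausdorff_space_subtopology[OF Hausdorff_T] .

lemma locally_compact_T0: "locally_compact_space T0"
  using locally_compact_space_closed_subset[OF locally_compact_T closedin_units] .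

lemma proper_map_rd: "proper_map T (prod_topology T0 T0) (\<lambda>x. (r x, d x))"
proof (rule compact_imp_proper_map)
  show "k_space (prod_topology T0 T0)"
    using locally_compact_T0 by (simp add: locally_compact_imp_k_space locally_compact_space_prod_topology)
  show "kc_space (prod_topology T0 T0)"
    using Hausdorff_T0 by (simp add: Hausdorff_imp_kc_space Hausdorff_space_prod_topology)
  show "(\<lambda>x. (r x, d x)) \<in> G \<rightarrow> topspace (prod_topology T0 T0)"
    using r_in_units d_in_units units_iff by auto
  show "continuous_map T (prod_topology T0 T0) (\<lambda>x. (r x, d x)) \<or> kc_space T"
    by (intro disjI1 continuous_map_pairedI continuous_map_r continuous_map_d)
  show "compactin T {x \<in> G. (r x, d x) \<in> K}" if "compactin (prod_topology T0 T0) K" for K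
    using proper that unfolding proper_groupoid_def by blast
qed

lemma compactin_rd_preimage:
  assumes "compactin T0 A" "compactin T0 B"
  shows "compactin T {x \<in> G. r x \<in> A \<and> d x \<in> B}"
proof -
  have "compactin (prod_topology T0 T0) (A \<times> B)"
    using assms by (simp add: compactin_Times)
  then have "compactin T {x \<in> G. (r x, d x) \<in> A \<times> B}"
    using proper unfolding proper_groupoid_def by blast
  then show ?thesis by simp
qed

lemma rd_fibre_rectangle:
  assumes u: "u \<in> G0" and v: "v \<in> G0" and W: "openin T W"
    and fibre: "{x \<in> G. r x = u \<and> d x = v} \<subseteq> W"
  obtains A B where "openin T0 A" "openin T0 B" "u \<in> A" "v \<in> B"
    "{x \<in> G. r x \<in> A \<and> d x \<in> B} \<subseteq> W"
proof -
  have "closed_map T (prod_topology T0 T0) (\<lambda>x. (r x, d x))"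
    using proper_map_rd by (rule proper_imp_closed_map)
  then have "\<exists>N. openin (prod_topology T0 T0) N \<and> (u, v) \<in> N \<and> {x \<in> G. (r x, d x) \<in> N} \<subseteq> W"
    if "(u, v) \<in> topspace (prod_topology T0 T0)" "{x \<in> G. (r x, d x) = (u, v)} \<subseteq> W"
    using W that unfolding closed_map_fibre_neighbourhood by blast
  moreover have "{x \<in> G. (r x, d x) = (u, v)} \<subseteq> W"
    using fibre by auto
  ultimately have "\<exists>N. openin (prod_topology T0 T0) N \<and> (u, v) \<in> N \<and> {x \<in> G. (r x, d x) \<in> N} \<subseteq> W"
    using u v units_iff by simp
  then obtain N where N: "openin (prod_topology T0 T0) N" "(u, v) \<in> N" "{x \<in> G. (r x, d x) \<in> N} \<subseteq> W"
    by blast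
  then obtain A B where "openin T0 A" "openin T0 B" "u \<in> A" "v \<in> B" "A \<times> B \<subseteq> N"
    unfolding openin_prod_topology_alt by meson
  with N(3) show thesis
    using that by blast
qed

text \<open>The fibres of \<open>(r, d)\<close> have at most one point because \<open>G\<close> is principal.\<close>
lemma continuous_near_constant_on_rd_rectangle:
  assumes f: "continuous_map T euclidean f" and u: "u \<in> G0" and v: "v \<in> G0" and "\<delta> > 0"
  obtains A B c where "openin T0 A" "openin T0 B" "u \<in> A" "v \<in> B"
    "\<And>y. y \<in> G \<Longrightarrow> r y \<in> A \<Longrightarrow> d y \<in> B \<Longrightarrow> dist (f y) c < \<delta>"
proof -
  obtain c where c: "\<And>y. arrow y u v \<Longrightarrow> dist (f y) c < \<delta>"
  proof (cases "\<exists>x. arrow x u v")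
    case True
    then obtain x where "arrow x u v" by blast
    then have "dist (f y) (f x) < \<delta>" if "arrow y u v" for y
      using arrow_unique[OF that] \<open>\<delta> > 0\<close> by simp
    then show thesis by (rule that)
  next
    case False
    then show thesis by (intro that[of undefined]) blast
  qed
  define W where "W = {y \<in> G. f y \<in> ball c \<delta>}"
  have "openin T W"
    unfolding W_def by (rule openin_continuous_map_preimage[OF f]) simp
  moreover have "{y \<in> G. r y = u \<and> d y = v} \<subseteq> W"
    using c unfolding W_def arrow_def by (auto simp: dist_commute)
  ultimately obtain A B where AB: "openin T0 A" "openin T0 B" "u \<in> A" "v \<in> B"
    "{y \<in> G. r y \<in> A \<and> d y \<in> B} \<subseteq> W"
    by (rule rd_fibre_rectangle[OF u v])
  have "dist (f y) c < \<delta>" if "y \<in> G" "r y \<in> A" "d y \<in> B" for y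
    using AB(5) that unfolding W_def by (auto simp: dist_commute)
  then show thesis
    by (rule that[OF AB(1-4)])
qed

lemma continuous_near_constant_on_rd_rectangles:
  assumes f: "continuous_map T euclidean f" and V: "openin T0 V" "P \<subseteq> V" and "\<delta> > 0"
  obtains A B c where "\<And>p. p \<in> P \<times> P \<Longrightarrow> openin T0 (A p) \<and> openin T0 (B p) \<and>
      fst p \<in> A p \<and> snd p \<in> B p \<and> A p \<subseteq> V \<and> B p \<subseteq> V \<and>
      (\<forall>y\<in>G. r y \<in> A p \<and> d y \<in> B p \<longrightarrow> dist (f y) (c p) < \<delta>)"
proof -
  define near where "near p A B c \<longleftrightarrow> openin T0 A \<and> openin T0 B \<and> fst p \<in> A \<and> snd p \<in> B \<and>
      A \<subseteq> V \<and> B \<subseteq> V \<and> (\<forall>y\<in>G. r y \<in> A \<and> d y \<in> B \<longrightarrow> dist (f y) c < \<delta>)" for p A B c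
  have "\<exists>A B c. near p A B c" if p: "p \<in> P \<times> P" for p
  proof -
    have uv: "fst p \<in> G0" "snd p \<in> G0"
      using p V openin_subset[OF V(1)] by auto
    obtain A B c where "openin T0 A" "openin T0 B" "fst p \<in> A" "snd p \<in> B"
      "\<And>y. y \<in> G \<Longrightarrow> r y \<in> A \<Longrightarrow> d y \<in> B \<Longrightarrow> dist (f y) c < \<delta>"
      using continuous_near_constant_on_rd_rectangle[OF f uv \<open>\<delta> > 0\<close>] by metis
    then have "near p (A \<inter> V) (B \<inter> V) c"
      unfolding near_def using p V by (auto intro: openin_Int)
    then show ?thesis by blast
  qed
  then obtain A B c where "\<And>p. p \<in> P \<times> P \<Longrightarrow> near p (A p) (B p) (c p)"
    by metis
  then show thesis
    unfolding near_def by (rule that)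
qed

end

section \<open>The orbit space and \<open>C\<^sub>\<sigma>(G)\<close>\<close>

locale groupoid_transversal = proper_principal_groupoid T r d m i
  for T :: "'g topology" and r d m i +
  fixes F :: "'g set" and \<sigma> :: "'g \<Rightarrow> 'g"
  assumes F_units: "F \<subseteq> units T r"
    and F_transversal: "\<forall>u\<in>units T r. \<exists>!v. v \<in> F \<and> (\<exists>x\<in>topspace T. d x = u \<and> r x = v)"
    and cross_section: "regular_cross_section T r d F \<sigma>"
    and \<sigma>_F: "\<forall>v\<in>F. \<sigma> v = v"
begin

abbreviation "q \<equiv> qmap r d m i \<sigma>"
abbreviation "Y \<equiv> quotient_topology T q (reductionF T r d F)"
abbreviation "CS \<equiv> Csigma T r d m i F \<sigma>"

definition e :: "'g \<Rightarrow> 'g" where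
  "e u = r (\<sigma> u)"

lemma arrow_\<sigma>: "u \<in> G0 \<Longrightarrow> arrow (\<sigma> u) (e u) u \<and> e u \<in> F"
  using cross_section unfolding regular_cross_section_def rangeF_def arrow_def e_def by blast

lemma F_meets_orbit_once:
  assumes x: "arrow x v u" and v: "v \<in> F"
  shows "v = e u"
proof -
  have u: "u \<in> G0"
    using arrow_units[OF x] by blast
  have "\<exists>!v. v \<in> F \<and> (\<exists>x\<in>G. d x = u \<and> r x = v)"
    using F_transversal u by blast
  moreover have "e u \<in> F \<and> (\<exists>x\<in>G. d x = u \<and> r x = e u)"
    using arrow_\<sigma>[OF u] unfolding arrow_def by blast
  moreover have "v \<in> F \<and> (\<exists>x\<in>G. d x = u \<and> r x = v)"
    using x v unfolding arrow_def by blast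
  ultimately show ?thesis by blast
qed

lemma e_F: "v \<in> F \<Longrightarrow> e v = v"
  using \<sigma>_F F_units units_iff unfolding e_def by auto

lemma arrow_within_F:
  assumes x: "arrow x u v" and "u \<in> F" "v \<in> F"
  shows "u = v \<and> x = v"
proof -
  have "u = v"
    using F_meets_orbit_once[OF x \<open>u \<in> F\<close>] e_F[OF \<open>v \<in> F\<close>] by simp
  moreover have "arrow v v v"
    using arrow_unit F_units \<open>v \<in> F\<close> by blast
  ultimately show ?thesis
    using arrow_unique x by blast
qed

lemma e_eq_iff:
  assumes u: "u \<in> G0" and a: "a \<in> G0"
  shows "e u = e a \<longleftrightarrow> (\<exists>y. arrow y u a)"
proof
  assume "\<exists>y. arrow y u a"
  then obtain y where y: "arrow y u a" by blast
  have "arrow (m (\<sigma> a) (i y)) (e a) u"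
    using arrow_mult arrow_inv[OF y] arrow_\<sigma>[OF a] by blast
  then show "e u = e a"
    using F_meets_orbit_once arrow_\<sigma>[OF a] by metis
next
  assume eq: "e u = e a"
  have "arrow (i (\<sigma> u)) u (e a)"
    using arrow_inv arrow_\<sigma>[OF u] eq by metis
  then have "arrow (m (i (\<sigma> u)) (\<sigma> a)) u a"
    using arrow_mult arrow_\<sigma>[OF a] by blast
  then show "\<exists>y. arrow y u a" by blast
qed

lemma arrow_qmap:
  assumes x: "x \<in> G"
  shows "arrow (q x) (e (r x)) (e (d x))"
proof -
  have "arrow (\<sigma> (r x)) (e (r x)) (r x)"
    using arrow_\<sigma> r_in_units[OF x] by blast
  moreover have "arrow (i (\<sigma> (d x))) (d x) (e (d x))"
    using arrow_inv arrow_\<sigma> d_in_units[OF x] by blast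
  ultimately show ?thesis
    unfolding qmap_def using arrow_r_d[OF x] by (blast intro: arrow_mult)
qed

lemma qmap_eq:
  assumes x: "x \<in> G"
  shows "q x = e (r x)" and "q x = e (d x)"
proof -
  have "e (r x) \<in> F" "e (d x) \<in> F"
    using arrow_\<sigma> r_in_units[OF x] d_in_units[OF x] by blast+
  then have "e (r x) = e (d x) \<and> q x = e (d x)"
    by (rule arrow_within_F[OF arrow_qmap[OF x]])
  then show "q x = e (r x)" and "q x = e (d x)" by simp_all
qed

lemma qmap_in_F: "x \<in> G \<Longrightarrow> q x \<in> F"
  using qmap_eq(2) arrow_\<sigma> d_in_units by metis

lemma reductionF_eq: "reductionF T r d F = F"
proof
  show "reductionF T r d F \<subseteq> F"
  proof
    fix x assume "x \<in> reductionF T r d F"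
    then have "x \<in> G" "r x \<in> F" "d x \<in> F"
      unfolding reductionF_def by auto
    then show "x \<in> F"
      using arrow_within_F[OF arrow_r_d] by metis
  qed
  show "F \<subseteq> reductionF T r d F"
    unfolding reductionF_def using F_units arrow_unit unfolding arrow_def by auto
qed

lemma topspace_Y: "topspace Y = F"
  using topspace_quotient_topology[of q T] qmap_in_F reductionF_eq by auto

lemma continuous_map_q: "continuous_map T Y q"
  by (rule continuous_map_quotient_topology) (use qmap_in_F reductionF_eq in auto)

lemma qmap_mem_e_image_iff:
  assumes x: "x \<in> G" and A: "A \<subseteq> G0"
  shows "q x \<in> e ` A \<longleftrightarrow> r x \<in> r ` {y \<in> G. d y \<in> A}"
proof -
  have "q x \<in> e ` A \<longleftrightarrow> (\<exists>a\<in>A. e (r x) = e a)"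
    using qmap_eq(1)[OF x] by auto
  also have "\<dots> \<longleftrightarrow> (\<exists>a\<in>A. \<exists>y. arrow y (r x) a)"
  proof (rule bex_cong[OF refl])
    fix a assume "a \<in> A"
    then show "e (r x) = e a \<longleftrightarrow> (\<exists>y. arrow y (r x) a)"
      using e_eq_iff[OF r_in_units[OF x]] A by blast
  qed
  also have "\<dots> \<longleftrightarrow> r x \<in> r ` {y \<in> G. d y \<in> A}"
  proof
    assume "\<exists>a\<in>A. \<exists>y. arrow y (r x) a"
    then obtain y where "y \<in> G" "d y \<in> A" "r y = r x"
      unfolding arrow_def by blast
    then show "r x \<in> r ` {y \<in> G. d y \<in> A}"
      by (intro image_eqI[of _ r y]) auto
  next
    assume "r x \<in> r ` {y \<in> G. d y \<in> A}"
    then obtain y where "y \<in> G" "d y \<in> A" "r x = r y"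
      by blast
    then show "\<exists>a\<in>A. \<exists>y. arrow y (r x) a"
      unfolding arrow_def by auto
  qed
  finally show ?thesis .
qed

lemma openin_Y_e_image:
  assumes A: "openin T0 A"
  shows "openin Y (e ` A)"
proof -
  have AG0: "A \<subseteq> G0"
    using openin_subset[OF A] by simp
  have "openin T0 (r ` {y \<in> G. d y \<in> A})"
    using open_map_r openin_continuous_map_preimage[OF continuous_map_d A]
    unfolding open_map_def by blast
  then have "openin T {x \<in> G. r x \<in> r ` {y \<in> G. d y \<in> A}}"
    by (rule openin_continuous_map_preimage[OF continuous_map_r])
  moreover have "{x \<in> G. q x \<in> e ` A} = {x \<in> G. r x \<in> r ` {y \<in> G. d y \<in> A}}"
    using qmap_mem_e_image_iff AG0 by blast
  moreover have "e ` A \<subseteq> reductionF T r d F"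
    using arrow_\<sigma> AG0 reductionF_eq by auto
  ultimately show ?thesis
    unfolding openin_quotient_topology by simp
qed

lemma Hausdorff_Y: "Hausdorff_space Y"
  unfolding Hausdorff_space_def topspace_Y
proof (intro allI impI)
  fix p p' assume pp: "p \<in> F \<and> p' \<in> F \<and> p \<noteq> p'"
  then have units: "p \<in> G0" "p' \<in> G0"
    using F_units by auto
  have "{x \<in> G. r x = p \<and> d x = p'} \<subseteq> {}"
    using arrow_within_F pp unfolding arrow_def by blast
  then obtain A B where AB: "openin T0 A" "openin T0 B" "p \<in> A" "p' \<in> B"
    "{x \<in> G. r x \<in> A \<and> d x \<in> B} \<subseteq> {}"
    by (rule rd_fibre_rectangle[OF units openin_empty])
  have "e a \<noteq> e b" if ab: "a \<in> A" "b \<in> B" for a b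
  proof
    assume "e a = e b"
    moreover have "a \<in> G0" "b \<in> G0"
      using ab openin_subset[OF AB(1)] openin_subset[OF AB(2)] by auto
    ultimately obtain y where "arrow y a b"
      using e_eq_iff by blast
    then show False
      using AB(5) ab unfolding arrow_def by blast
  qed
  then have "disjnt (e ` A) (e ` B)"
    unfolding disjnt_def by blast
  moreover have "p \<in> e ` A" "p' \<in> e ` B"
    using AB(3,4) e_F pp by (metis image_eqI)+
  ultimately show "\<exists>U V. openin Y U \<and> openin Y V \<and> p \<in> U \<and> p' \<in> V \<and> disjnt U V"
    using openin_Y_e_image AB(1,2) by blast
qed

lemma locally_compact_Y: "locally_compact_space Y"
  unfolding locally_compact_space_def topspace_Y
proof
  fix p assume p: "p \<in> F"
  then have "p \<in> topspace T0"
    using F_units units_iff by auto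
  then obtain A K where AK: "openin T0 A" "compactin T0 K" "p \<in> A" "A \<subseteq> K"
    using locally_compact_T0 unfolding locally_compact_space_def by blast
  have "e ` A \<subseteq> q ` K"
  proof
    fix z assume "z \<in> e ` A"
    then obtain a where a: "a \<in> A" "z = e a" by blast
    then have "a \<in> K" "a \<in> G0"
      using AK(2,4) compactin_subset_topspace by fastforce+
    then have "q a = z"
      using a qmap_eq(1)[of a] units_iff by simp
    then show "z \<in> q ` K"
      using \<open>a \<in> K\<close> by blast
  qed
  moreover have "compactin Y (q ` K)"
    using AK(2) image_compactin[OF _ continuous_map_q] by (simp add: compactin_subtopology)
  moreover have "p \<in> e ` A"
    using AK(3) e_F p by (metis image_eqI)
  ultimately show "\<exists>U K. openin Y U \<and> compactin Y K \<and> p \<in> U \<and> U \<subseteq> K"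
    using openin_Y_e_image[OF AK(1)] by blast
qed

lemma Csigma_sum_mem:
  assumes S: "finite S" and g: "\<And>p. p \<in> S \<Longrightarrow> g1 p \<in> Cc T0 \<and> g2 p \<in> Cc T0 \<and> g p \<in> Cc Y"
  shows "(\<lambda>x. if x \<in> G then \<Sum>p\<in>S. c p * g1 p (r x) * g p (q x) * g2 p (d x) else 0) \<in> CS"
proof -
  obtain h where h: "bij_betw h {..<card S} S"
    using ex_bij_betw_nat_finite[OF S] by (auto simp: atLeast0LessThan)
  have "h k \<in> S" if "k < card S" for k
    using h that bij_betwE by blast
  then have mem: "\<forall>k<card S. (g1 \<circ> h) k \<in> Cc T0 \<and> (g2 \<circ> h) k \<in> Cc T0 \<and> (g \<circ> h) k \<in> Cc Y"
    using g by simp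
  have "(\<Sum>p\<in>S. c p * g1 p (r x) * g p (q x) * g2 p (d x)) =
      (\<Sum>k<card S. (c \<circ> h) k * (g1 \<circ> h) k (r x) * (g \<circ> h) k (q x) * (g2 \<circ> h) k (d x))" for x
    using sum.reindex_bij_betw[OF h, of "\<lambda>p. c p * g1 p (r x) * g p (q x) * g2 p (d x)"] by simp
  then have eq: "(\<lambda>x. if x \<in> G then \<Sum>p\<in>S. c p * g1 p (r x) * g p (q x) * g2 p (d x) else 0) =
      (\<lambda>x. if x \<in> G then \<Sum>k<card S. (c \<circ> h) k * (g1 \<circ> h) k (r x) * (g \<circ> h) k (q x) * (g2 \<circ> h) k (d x)
        else 0)"
    by (simp only: comp_apply)
  show ?thesis
    unfolding Csigma_def mem_Collect_eq
    by (rule exI[of _ "card S"], rule exI[of _ "c \<circ> h"], rule exI[of _ "g1 \<circ> h"], rule exI[of _ "g \<circ> h"],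
        rule exI[of _ "g2 \<circ> h"], rule conjI[OF mem eq])
qed

lemma continuous_map_Csigma_term:
  assumes "g1 \<in> Cc T0" "g2 \<in> Cc T0" "g \<in> Cc Y"
  shows "continuous_map T euclidean (\<lambda>x. c * g1 (r x) * g (q x) * g2 (d x))"
proof -
  have "continuous_map T0 euclidean g1" "continuous_map T0 euclidean g2" "continuous_map Y euclidean g"
    using assms unfolding Cc_def by blast+
  then have "continuous_map T euclidean (g1 \<circ> r)" "continuous_map T euclidean (g2 \<circ> d)"
    "continuous_map T euclidean (g \<circ> q)"
    using continuous_map_compose continuous_map_r continuous_map_d continuous_map_q by blast+
  then show ?thesis
    unfolding o_def by (intro continuous_map_mult continuous_map_const[THEN iffD2]) simp_all
qed

lemma Csigma_subset_Cc: "CS \<subseteq> Cc T"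
proof
  fix f assume "f \<in> CS"
  then obtain n :: nat and c g1 g g2 where g: "\<forall>k<n. g1 k \<in> Cc T0 \<and> g2 k \<in> Cc T0 \<and> g k \<in> Cc Y"
    and f: "f = (\<lambda>x. if x \<in> G then \<Sum>k<n. c k * g1 k (r x) * g k (q x) * g2 k (d x) else 0)"
    unfolding Csigma_def by blast
  define supp where "supp h = T0 closure_of {w \<in> topspace T0. h w \<noteq> (0::complex)}" for h
  define L where "L = (\<Union>k<n. supp (g1 k) \<union> supp (g2 k))"
  have "compactin T0 (supp (g1 k) \<union> supp (g2 k))" if "k < n" for k
    using g that unfolding supp_def Cc_def by (simp add: compactin_Un)
  then have L: "compactin T0 L"
    unfolding L_def by (intro compactin_Union) auto
  have "{x \<in> G. f x \<noteq> 0} \<subseteq> {x \<in> G. r x \<in> L \<and> d x \<in> L}"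
  proof clarify
    fix x assume x: "x \<in> G" "f x \<noteq> 0"
    then obtain k where k: "k < n" "c k * g1 k (r x) * g k (q x) * g2 k (d x) \<noteq> 0"
      unfolding f by (meson lessThan_iff sum.neutral)
    have "r x \<in> supp (g1 k)"
      unfolding supp_def by (rule mem_closure_of_support) (use k(2) r_in_units[OF x(1)] r_in[OF x(1)] in auto)
    moreover have "d x \<in> supp (g2 k)"
      unfolding supp_def by (rule mem_closure_of_support) (use k(2) d_in_units[OF x(1)] d_in[OF x(1)] in auto)
    ultimately
    show "r x \<in> L \<and> d x \<in> L"
      unfolding L_def using k(1) by blast
  qed
  then have "compactin T (T closure_of {x \<in> G. f x \<noteq> 0})"
    by (rule compactin_closure_of_subset[OF Hausdorff_T compactin_rd_preimage[OF L L]])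
  moreover have "continuous_map T euclidean f"
  proof -
    have "continuous_map T euclidean (\<lambda>x. \<Sum>k<n. c k * g1 k (r x) * g k (q x) * g2 k (d x))"
      using g by (intro continuous_map_sum continuous_map_Csigma_term) auto
    then show ?thesis
      unfolding f by (rule continuous_map_eq) simp
  qed
  ultimately show "f \<in> Cc T"
    unfolding Cc_def f by simp
qed

lemma orbit_space_bump:
  assumes L: "compactin T0 L"
  obtains h where "bump_function Y (topspace Y) h" "\<And>x. x \<in> G \<Longrightarrow> r x \<in> L \<Longrightarrow> d x \<in> L \<Longrightarrow> h (q x) = 1"
proof -
  define K where "K = {x \<in> G. r x \<in> L \<and> d x \<in> L}"
  have qK: "compactin Y (q ` K)"
    unfolding K_def by (rule image_compactin[OF compactin_rd_preimage[OF L L] continuous_map_q])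
  then have "q ` K \<subseteq> topspace Y"
    by (rule compactin_subset_topspace)
  then obtain h where "bump_function Y (topspace Y) h" "\<And>y. y \<in> q ` K \<Longrightarrow> h y = 1"
    using compactly_supported_Urysohn[OF locally_compact_Y Hausdorff_Y qK openin_topspace] by blast
  then show thesis
    using that unfolding K_def by blast
qed

text \<open>The orbit-space factor of the generators of \<open>C\<^sub>\<sigma>(G)\<close> can be dropped: a bump on the
  orbit space equal to \<open>1\<close> on \<open>q K\<close>, for a compact \<open>K\<close> carrying all the products, does not
  change them.\<close>
lemma Csigma_sum_of_products:
  assumes S: "finite S"
    and bumps: "\<And>p. p \<in> S \<Longrightarrow> bump_function T0 (topspace T0) (\<phi> p) \<and> bump_function T0 (topspace T0) (\<psi> p)"
  shows "(\<lambda>x. if x \<in> G then \<Sum>p\<in>S. (\<phi> p (r x) * \<psi> p (d x)) *\<^sub>R c p else 0) \<in> CS"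
proof -
  define supp where "supp \<theta> = T0 closure_of {u \<in> topspace T0. \<theta> u \<noteq> (0::real)}" for \<theta>
  define L where "L = (\<Union>p\<in>S. supp (\<phi> p) \<union> supp (\<psi> p))"
  have "compactin T0 (supp (\<phi> p) \<union> supp (\<psi> p))" if "p \<in> S" for p
    using bumps[OF that] unfolding supp_def bump_function_def by (simp add: compactin_Un)
  moreover have "finite ((\<lambda>p. supp (\<phi> p) \<union> supp (\<psi> p)) ` S)"
    using S by simp
  ultimately have "compactin T0 L"
    unfolding L_def by (intro compactin_Union) auto
  then obtain h where h: "bump_function Y (topspace Y) h"
    "\<And>x. x \<in> G \<Longrightarrow> r x \<in> L \<Longrightarrow> d x \<in> L \<Longrightarrow> h (q x) = 1"
    using orbit_space_bump by blast
  have "(\<lambda>x. if x \<in> G then \<Sum>p\<in>S. c p * complexify T0 (\<phi> p) (r x) * complexify Y h (q x) *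
      complexify T0 (\<psi> p) (d x) else 0) \<in> CS"
    using bumps h(1) Cc_complexify by (intro Csigma_sum_mem[OF S]) blast
  moreover have "c p * complexify T0 (\<phi> p) (r x) * complexify Y h (q x) * complexify T0 (\<psi> p) (d x) =
      (\<phi> p (r x) * \<psi> p (d x)) *\<^sub>R c p" if x: "x \<in> G" and p: "p \<in> S" for x p
  proof (cases "\<phi> p (r x) * \<psi> p (d x) = 0")
    case False
    have "r x \<in> supp (\<phi> p)"
      unfolding supp_def by (rule mem_closure_of_support) (use False r_in_units[OF x] r_in[OF x] in auto)
    moreover have "d x \<in> supp (\<psi> p)"
      unfolding supp_def by (rule mem_closure_of_support) (use False d_in_units[OF x] d_in[OF x] in auto)
    ultimately have "h (q x) = 1"
      using h(2)[OF x] p unfolding L_def by blast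
    then show ?thesis
      using r_in_units[OF x] d_in_units[OF x] r_in[OF x] d_in[OF x] qmap_in_F[OF x]
      by (simp add: complexify_apply topspace_Y scaleR_conv_of_real)
  qed (use r_in_units[OF x] d_in_units[OF x] r_in[OF x] d_in[OF x] in
        \<open>auto simp: complexify_apply scaleR_conv_of_real\<close>)
  then have "(\<Sum>p\<in>S. c p * complexify T0 (\<phi> p) (r x) * complexify Y h (q x) * complexify T0 (\<psi> p) (d x)) =
      (\<Sum>p\<in>S. (\<phi> p (r x) * \<psi> p (d x)) *\<^sub>R c p)" if "x \<in> G" for x
    using that by (intro sum.cong) auto
  ultimately show ?thesis
    by (simp cong: if_cong)
qed

lemma near_constant_rectangle_partition:
  assumes f: "continuous_map T euclidean f" and "\<delta> > 0" and P: "compactin T0 P"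
    and V: "openin T0 V" "P \<subseteq> V"
  obtains S :: "('g \<times> 'g) set" and \<phi> \<psi> c where "finite S"
    "\<forall>p\<in>S. bump_function T0 V (\<phi> p) \<and> bump_function T0 V (\<psi> p)"
    "\<forall>s t. (\<Sum>p\<in>S. \<phi> p s * \<psi> p t) \<le> 1"
    "\<forall>s\<in>P. \<forall>t\<in>P. (\<Sum>p\<in>S. \<phi> p s * \<psi> p t) = 1"
    "\<forall>p\<in>S. \<forall>x\<in>G. \<phi> p (r x) * \<psi> p (d x) \<noteq> 0 \<longrightarrow> dist (f x) (c p) < \<delta>"
proof -
  obtain A B c where ABc: "\<And>p. p \<in> P \<times> P \<Longrightarrow> openin T0 (A p) \<and> openin T0 (B p) \<and>
      fst p \<in> A p \<and> snd p \<in> B p \<and> A p \<subseteq> V \<and> B p \<subseteq> V \<and>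
      (\<forall>y\<in>G. r y \<in> A p \<and> d y \<in> B p \<longrightarrow> dist (f y) (c p) < \<delta>)"
    using continuous_near_constant_on_rd_rectangles[OF f V \<open>\<delta> > 0\<close>] by blast
  have AB: "openin T0 (A p) \<and> openin T0 (B p) \<and> fst p \<in> A p \<and> snd p \<in> B p" if "p \<in> P \<times> P" for p
    using ABc[OF that] by blast
  obtain S \<phi> \<psi> where S: "finite S" "S \<subseteq> P \<times> P"
    and bumps: "\<And>p. p \<in> S \<Longrightarrow> bump_function T0 (A p) (\<phi> p) \<and> bump_function T0 (B p) (\<psi> p)"
    and mass: "\<And>s t. (\<Sum>p\<in>S. \<phi> p s * \<psi> p t) \<le> 1"
    and full_mass: "\<And>s t. s \<in> P \<Longrightarrow> t \<in> P \<Longrightarrow> (\<Sum>p\<in>S. \<phi> p s * \<psi> p t) = 1"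
    using rectangle_partition_of_unity[OF locally_compact_T0 Hausdorff_T0 P AB] by blast
  have bumps_V: "bump_function T0 V (\<phi> p) \<and> bump_function T0 V (\<psi> p)" if "p \<in> S" for p
  proof -
    have "A p \<subseteq> V" "B p \<subseteq> V"
      using ABc S(2) that by blast+
    then show ?thesis
      using bumps[OF that] bump_function_mono by blast
  qed
  have near: "dist (f x) (c p) < \<delta>" if p: "p \<in> S" and x: "x \<in> G" and "\<phi> p (r x) * \<psi> p (d x) \<noteq> 0"
    for p x
  proof -
    have "r x \<in> A p" "d x \<in> B p"
      using bumps[OF p] that(3) r_in_units[OF x] d_in_units[OF x] r_in[OF x] d_in[OF x]
      unfolding bump_function_def by auto
    then show ?thesis
      using ABc S(2) p x by blast
  qed
  show thesis
    using S(1) bumps_V mass full_mass near by (intro that ballI allI impI)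
qed

lemma Csigma_uniform_approx:
  assumes f: "f \<in> Cc T" and "\<delta> > 0" and P: "compactin T0 P" and V: "openin T0 V" "P \<subseteq> V"
    and f_supp: "\<And>x. x \<in> G \<Longrightarrow> f x \<noteq> 0 \<Longrightarrow> r x \<in> P \<and> d x \<in> P"
  obtains a where "a \<in> CS" "\<And>x. x \<in> G \<Longrightarrow> cmod (f x - a x) \<le> \<delta>"
    "\<And>x. x \<in> G \<Longrightarrow> a x \<noteq> 0 \<Longrightarrow> r x \<in> V \<and> d x \<in> V"
proof -
  have f_cont: "continuous_map T euclidean f"
    using f unfolding Cc_def by blast
  obtain S :: "('g \<times> 'g) set" and \<phi> \<psi> c where S: "finite S"
    and bumps: "\<forall>p\<in>S. bump_function T0 V (\<phi> p) \<and> bump_function T0 V (\<psi> p)"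
    and mass: "\<forall>s t. (\<Sum>p\<in>S. \<phi> p s * \<psi> p t) \<le> 1"
    and full_mass: "\<forall>s\<in>P. \<forall>t\<in>P. (\<Sum>p\<in>S. \<phi> p s * \<psi> p t) = 1"
    and near: "\<forall>p\<in>S. \<forall>x\<in>G. \<phi> p (r x) * \<psi> p (d x) \<noteq> 0 \<longrightarrow> dist (f x) (c p) < \<delta>"
    by (rule near_constant_rectangle_partition[OF f_cont \<open>\<delta> > 0\<close> P V])
  define w where "w x p = \<phi> p (r x) * \<psi> p (d x)" for x p
  define a where "a x = (if x \<in> G then \<Sum>p\<in>S. w x p *\<^sub>R c p else 0)" for x
  show thesis
  proof
    show "a \<in> CS"
      unfolding a_def[abs_def] w_def
      using bumps bump_function_topspace by (intro Csigma_sum_of_products[OF S]) blast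
    show "cmod (f x - a x) \<le> \<delta>" if x: "x \<in> G" for x
    proof -
      have "cmod (f x - (\<Sum>p\<in>S. w x p *\<^sub>R c p)) \<le> \<delta>"
      proof (rule norm_diff_weighted_sum_le[OF S])
        show "0 \<le> w x p" if "p \<in> S" for p
          using bumps that unfolding w_def bump_function_def by simp
        show "cmod (f x - c p) \<le> \<delta>" if "p \<in> S" "w x p \<noteq> 0" for p
          using near that x unfolding w_def by (simp add: dist_norm less_imp_le)
        show "(\<Sum>p\<in>S. w x p) = 1" if "f x \<noteq> 0"
          unfolding w_def using f_supp[OF x that] full_mass by blast
      qed (use mass \<open>\<delta> > 0\<close> in \<open>auto simp: w_def\<close>)
      then show ?thesis
        using x unfolding a_def by simp
    qed
    show "r x \<in> V \<and> d x \<in> V" if x: "x \<in> G" and "a x \<noteq> 0" for x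
    proof -
      have "(\<Sum>p\<in>S. w x p *\<^sub>R c p) \<noteq> 0"
        using \<open>a x \<noteq> 0\<close> x unfolding a_def by simp
      then obtain p where "p \<in> S" "w x p *\<^sub>R c p \<noteq> 0"
        by (rule sum.not_neutral_contains_not_neutral)
      then have p: "p \<in> S" and "\<phi> p (r x) \<noteq> 0" "\<psi> p (d x) \<noteq> 0"
        unfolding w_def by auto
      moreover have "r x \<in> topspace T0" "d x \<in> topspace T0"
        using r_in_units[OF x] d_in_units[OF x] r_in[OF x] d_in[OF x] by simp_all
      ultimately show ?thesis
        using bumps p unfolding bump_function_def by blast
    qed
  qed
qed

lemma Cc_rd_support:
  assumes f: "f \<in> Cc T"
  obtains P where "compactin T0 P" "\<And>x. x \<in> G \<Longrightarrow> f x \<noteq> 0 \<Longrightarrow> r x \<in> P \<and> d x \<in> P"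
proof
  define K where "K = T closure_of {x \<in> G. f x \<noteq> 0}"
  have "compactin T K"
    using f unfolding Cc_def K_def by blast
  then show "compactin T0 (r ` K \<union> d ` K)"
    using continuous_map_r continuous_map_d by (intro compactin_Un image_compactin)
  show "r x \<in> r ` K \<union> d ` K \<and> d x \<in> r ` K \<union> d ` K" if "x \<in> G" "f x \<noteq> 0" for x
    using mem_closure_of_support[of x T f] that unfolding K_def by blast
qed

lemma dense_ind_lim_Csigma: "dense_ind_lim T CS"
  unfolding dense_ind_lim_def
proof (intro conjI ballI allI impI Csigma_subset_Cc)
  fix f U assume f: "f \<in> Cc T" and U: "ind_lim_zero_nbhd T U"
  obtain P where P: "compactin T0 P" and f_supp: "\<And>x. x \<in> G \<Longrightarrow> f x \<noteq> 0 \<Longrightarrow> r x \<in> P \<and> d x \<in> P"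
    using Cc_rd_support[OF f] by blast
  have "\<exists>V Q. openin T0 V \<and> compactin T0 Q \<and> closedin T0 Q \<and> P \<subseteq> V \<and> V \<subseteq> Q"
    using locally_compact_T0 P
    unfolding locally_compact_space_compact_closed_compact[OF disjI1[OF Hausdorff_T0]] by blast
  then obtain V Q where V: "openin T0 V" "P \<subseteq> V" and Q: "compactin T0 Q" "V \<subseteq> Q"
    by blast
  define K where "K = {x \<in> G. r x \<in> Q \<and> d x \<in> Q}"
  have "\<exists>\<epsilon>>0. \<forall>g\<in>Cc T. {x \<in> G. g x \<noteq> 0} \<subseteq> K \<and> (\<forall>x. cmod (g x) < \<epsilon>) \<longrightarrow> g \<in> U"
    using U compactin_rd_preimage[OF Q(1) Q(1)] unfolding ind_lim_zero_nbhd_def K_def by blast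
  then obtain \<epsilon> where "\<epsilon> > 0"
    and small: "\<forall>g\<in>Cc T. {x \<in> G. g x \<noteq> 0} \<subseteq> K \<and> (\<forall>x. cmod (g x) < \<epsilon>) \<longrightarrow> g \<in> U"
    by blast
  then have "\<epsilon> / 2 > 0"
    by simp
  obtain a where a: "a \<in> CS" "\<And>x. x \<in> G \<Longrightarrow> cmod (f x - a x) \<le> \<epsilon> / 2"
    "\<And>x. x \<in> G \<Longrightarrow> a x \<noteq> 0 \<Longrightarrow> r x \<in> V \<and> d x \<in> V"
    using Csigma_uniform_approx[OF f \<open>\<epsilon> / 2 > 0\<close> P V f_supp] by blast
  have aC: "a \<in> Cc T"
    using a(1) Csigma_subset_Cc by blast
  have "(\<lambda>x. f x - a x) \<in> U"
  proof (rule small[rule_format, OF _ conjI])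
    show "(\<lambda>x. f x - a x) \<in> Cc T"
      using Cc_diff[OF Hausdorff_T f aC] .
    show "{x \<in> G. f x - a x \<noteq> 0} \<subseteq> K"
      using f_supp a(3) V(2) Q(2) unfolding K_def by fastforce
    have bound: "cmod (f x - a x) \<le> \<epsilon> / 2" for x
      using a(2)[of x] f aC \<open>\<epsilon> > 0\<close> unfolding Cc_def by (cases "x \<in> G") auto
    show "\<forall>x. cmod (f x - a x) < \<epsilon>"
    proof
      show "cmod (f x - a x) < \<epsilon>" for x
        using bound[of x] \<open>\<epsilon> > 0\<close> by linarith
    qed
  qed
  then show "\<exists>a\<in>CS. (\<lambda>x. f x - a x) \<in> U"
    using a(1) by blast
qed

end

theorem mainTheorem12:
  fixes T :: "'g topology" and r d :: "'g \<Rightarrow> 'g" and m :: "'g \<Rightarrow> 'g \<Rightarrow> 'g"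
    and i :: "'g \<Rightarrow> 'g" and F :: "'g set" and \<sigma> :: "'g \<Rightarrow> 'g"
  assumes "lcsc_groupoid T r d m i"
    and "principal_groupoid T r d"
    and "proper_groupoid T r d"
    and "F \<subseteq> units T r" and "borel_in (subtopology T (units T r)) F"
    and "\<forall>u\<in>units T r. \<exists>!v. v \<in> F \<and> (\<exists>x\<in>topspace T. d x = u \<and> r x = v)"
    and "regular_cross_section T r d F \<sigma>"
    and "\<forall>v\<in>F. \<sigma> v = v"
  shows "Hausdorff_space (quotient_topology T (qmap r d m i \<sigma>) (reductionF T r d F)) \<and>
         locally_compact_space (quotient_topology T (qmap r d m i \<sigma>) (reductionF T r d F)) \<and>
         dense_ind_lim T (Csigma T r d m i F \<sigma>)"
proof -
  interpret groupoid_transversal T r d m i F \<sigma>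
    using assms by unfold_locales
  show ?thesis
    using Hausdorff_Y locally_compact_Y dense_ind_lim_Csigma by blast
qed

end
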